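(* Let $G$ be a connected (finite, simple) graph with girth $g=g(G)<\infty$, and let $\chi$ be the largest Euler characteristic of a surface in which $G$ can be embedded; consider $G$ embedded in such a surface. Let $ad(G)=2|E(G)|/|V(G)|$ be the average degree of $G$ and $|G|=|V(G)|$. Then: \begin{enumerate} \item[(i)] $ad(G) \leq \frac{2g}{g-2}\left(1-\frac{\chi}{|G|}\right)$. \item[(ii)] If $G$ contains no two intersecting $g$-faces, then $ad(G) \leq 2 + \frac{4g+2}{g^2-g}-2\left(1+\frac{2}{g-1}\right)\frac{\chi}{|G|}$. \item[(iii)] If $G$ contains no two adjacent $g$-faces, then $ad(G) \leq \frac{2g(g+1)}{g^2-g-1}\left(1-\frac{\chi}{|G|}\right)$. \end{enumerate}
   Context: Graphs have no loops or multiple edges. Surfaces are compact 2-manifolds: the orientable surface $\mathbb{S}_h$ (sphere with $h$ handles) has Euler characteristic $2-2h$, $h\ge 0$, and the non-orientable surface $\mathbb{N}_k$ (sphere with $k$ crosscaps) has Euler characteristic $2-k$, $k\ge1$. If $G$ is embedded in a surface $\mathbb{M}$, the faces of $G$ are the connected components of $\mathbb{M}-G$; the degree of a face is the length of its boundary walk, and a $g$-face is a face of degree $g$. Two faces are intersecting if they share a common vertex, and adjacent if they share a common edge. The girth $g(G)$ is the length of a shortest cycle of $G$. *)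

theory Defs
  imports Complex_Main
begin

definition simple_graph :: "'a set \<Rightarrow> 'a set set \<Rightarrow> bool" where
  "simple_graph V E \<longleftrightarrow> finite V \<and>
     (\<forall>e\<in>E. \<exists>u v. u \<in> V \<and> v \<in> V \<and> u \<noteq> v \<and> e = {u, v})"

definition connected_graph :: "'a set \<Rightarrow> 'a set set \<Rightarrow> bool" where
  "connected_graph V E \<longleftrightarrow> V \<noteq> {} \<and>
     (\<forall>u\<in>V. \<forall>v\<in>V. (\<lambda>a b. {a, b} \<in> E)\<^sup>*\<^sup>* u v)"

definition is_cycle :: "'a set \<Rightarrow> 'a set set \<Rightarrow> 'a list \<Rightarrow> bool" where
  "is_cycle V E vs \<longleftrightarrow> length vs \<ge> 3 \<and> distinct vs \<and> set vs \<subseteq> V \<and>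
     (\<forall>i < length vs. {vs ! i, vs ! ((i + 1) mod length vs)} \<in> E)"

definition has_cycle :: "'a set \<Rightarrow> 'a set set \<Rightarrow> bool" where
  "has_cycle V E \<longleftrightarrow> (\<exists>vs. is_cycle V E vs)"

definition girth :: "'a set \<Rightarrow> 'a set set \<Rightarrow> nat" where
  "girth V E = (LEAST n. \<exists>vs. is_cycle V E vs \<and> length vs = n)"

text \<open>A (possibly non-orientable) cellular embedding of a graph in a closed surface is
  encoded by its set of flags with the three fixed-point-free involutions
  t0 (change vertex), t1 (change edge), t2 (change face), with t0 t2 = t2 t0,
  and the vertex of each flag.\<close>

record ('f, 'a) gmap =
  flags :: "'f set"
  t0 :: "'f \<Rightarrow> 'f"
  t1 :: "'f \<Rightarrow> 'f"
  t2 :: "'f \<Rightarrow> 'f"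
  vtx :: "'f \<Rightarrow> 'a"

definition orb2 :: "('f \<Rightarrow> 'f) \<Rightarrow> ('f \<Rightarrow> 'f) \<Rightarrow> 'f \<Rightarrow> 'f set" where
  "orb2 s t x = {y. (\<lambda>a b. b = s a \<or> b = t a)\<^sup>*\<^sup>* x y}"

definition fpf_involution :: "'f set \<Rightarrow> ('f \<Rightarrow> 'f) \<Rightarrow> bool" where
  "fpf_involution F s \<longleftrightarrow> (\<forall>x\<in>F. s x \<in> F \<and> s (s x) = x \<and> s x \<noteq> x)"

definition medge :: "('f, 'a) gmap \<Rightarrow> 'f \<Rightarrow> 'a set" where
  "medge M x = {vtx M x, vtx M (t0 M x)}"

definition is_embedding :: "'a set \<Rightarrow> 'a set set \<Rightarrow> ('f, 'a) gmap \<Rightarrow> bool" where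
  "is_embedding V E M \<longleftrightarrow>
     finite (flags M) \<and>
     fpf_involution (flags M) (t0 M) \<and>
     fpf_involution (flags M) (t1 M) \<and>
     fpf_involution (flags M) (t2 M) \<and>
     (\<forall>x\<in>flags M. t0 M (t2 M x) = t2 M (t0 M x) \<and> t0 M x \<noteq> t2 M x) \<and>
     (\<forall>x\<in>flags M. \<forall>y\<in>flags M.
        (\<lambda>a b. b = t0 M a \<or> b = t1 M a \<or> b = t2 M a)\<^sup>*\<^sup>* x y) \<and>
     (\<forall>x\<in>flags M. vtx M x \<in> V \<and> vtx M (t1 M x) = vtx M x \<and> vtx M (t2 M x) = vtx M x) \<and>
     (\<forall>x\<in>flags M. medge M x \<in> E) \<and>
     (\<forall>e\<in>E. \<exists>x\<in>flags M. medge M x = e) \<and>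
     (\<forall>v\<in>V. \<exists>x\<in>flags M. vtx M x = v) \<and>
     (\<forall>x\<in>flags M. \<forall>y\<in>flags M. medge M x = medge M y \<longrightarrow>
        y \<in> {x, t0 M x, t2 M x, t0 M (t2 M x)}) \<and>
     (\<forall>x\<in>flags M. \<forall>y\<in>flags M. vtx M x = vtx M y \<longrightarrow> y \<in> orb2 (t1 M) (t2 M) x)"

text \<open>Faces are the orbits of \<langle>t0, t1\<rangle>; the boundary walk of a face traverses
  half as many edge-sides as the face has flags.\<close>

definition faces :: "('f, 'a) gmap \<Rightarrow> 'f set set" where
  "faces M = (\<lambda>x. orb2 (t0 M) (t1 M) x) ` flags M"

definition face_deg :: "'f set \<Rightarrow> nat" where
  "face_deg f = card f div 2"

definition face_vertices :: "('f, 'a) gmap \<Rightarrow> 'f set \<Rightarrow> 'a set" where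
  "face_vertices M f = vtx M ` f"

definition face_edges :: "('f, 'a) gmap \<Rightarrow> 'f set \<Rightarrow> 'a set set" where
  "face_edges M f = medge M ` f"

definition euler_char :: "'a set \<Rightarrow> 'a set set \<Rightarrow> ('f, 'a) gmap \<Rightarrow> int" where
  "euler_char V E M = int (card V) - int (card E) + int (card (faces M))"

definition no_two_intersecting_faces_of_deg :: "('f, 'a) gmap \<Rightarrow> nat \<Rightarrow> bool" where
  "no_two_intersecting_faces_of_deg M g \<longleftrightarrow>
     (\<forall>f1\<in>faces M. \<forall>f2\<in>faces M. f1 \<noteq> f2 \<and> face_deg f1 = g \<and> face_deg f2 = g \<longrightarrow>
        face_vertices M f1 \<inter> face_vertices M f2 = {})"

definition no_two_adjacent_faces_of_deg :: "('f, 'a) gmap \<Rightarrow> nat \<Rightarrow> bool" where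
  "no_two_adjacent_faces_of_deg M g \<longleftrightarrow>
     (\<forall>f1\<in>faces M. \<forall>f2\<in>faces M. f1 \<noteq> f2 \<and> face_deg f1 = g \<and> face_deg f2 = g \<longrightarrow>
        face_edges M f1 \<inter> face_edges M f2 = {})"

end

theory Submission
  imports Defs "HOL-Library.Transitive_Closure_Table"
begin

text \<open>
  Every face has degree at least g. If a face f lies on only one side of the edge uv of one
  of its flags x, then going around f without crossing that side of uv one still returns to
  the flag t0 x: otherwise the flags reached would be paired by t1 and, apart from x, by t0,
  which parity forbids. This walk from u to v avoiding uv closes a cycle of G on the boundary
  of f. A face lying on both sides of all its edges is the whole surface and contains every
  cycle of G.

  As the faces partition the 4|E| flags and a face of degree d has 2d flags, counting gives
  g F_g + (g + 1) F_o \<le> 2|E|, with F_g the number of g-faces and F_o that of the others.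
  If no two g-faces intersect, their vertex sets are disjoint of size at least g, so
  g F_g \<le> |V|. If no two are adjacent, no edge has g-faces on both sides, so the flags of
  g-faces and their t2-images are disjoint and g F_g \<le> |E|. Substituting
  F_g + F_o = \<chi> - |V| + |E| turns these inequalities into the three bounds.
\<close>

section \<open>Counting with fixed-point-free involutions\<close>

lemma even_card_fpf_involution:
  assumes "finite S" "fpf_involution S s"
  shows "even (card S)"
  using assms
proof (induction "card S" arbitrary: S rule: less_induct)
  case less
  show ?case
  proof (cases "S = {}")
    case False
    then obtain a where a: "a \<in> S" by blast
    then have sa: "s a \<in> S" "s a \<noteq> a"
      using less.prems(2) unfolding fpf_involution_def by auto
    have "fpf_involution (S - {a, s a}) s"
      using less.prems(2) a unfolding fpf_involution_def by (auto, metis)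
    moreover have card: "card (S - {a, s a}) = card S - 2"
      using less.prems(1) a sa by (simp add: card_Diff_subset)
    moreover have "card S \<ge> 2"
      using less.prems(1) a sa card_mono[of S "{a, s a}"] by simp
    ultimately have "even (card (S - {a, s a}))"
      using less.prems(1) \<open>card S \<ge> 2\<close> by (intro less.hyps) auto
    then show ?thesis
      using card \<open>card S \<ge> 2\<close> by simp
  qed simp
qed

lemma not_fpf_involution_Diff_singleton:
  assumes "finite S" "x \<in> S" "fpf_involution S s"
  shows "\<not> fpf_involution (S - {x}) t"
proof
  assume "fpf_involution (S - {x}) t"
  then have "even (card (S - {x}))"
    using assms(1) by (simp add: even_card_fpf_involution)
  moreover have "even (card S)"
    using assms(1,3) by (rule even_card_fpf_involution)
  moreover have "card S = Suc (card (S - {x}))"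
    using assms(1,2) by (rule card_Suc_Diff1 [symmetric])
  ultimately show False
    by simp
qed

lemma card_eq_sum_card_fibers:
  "finite A \<Longrightarrow> card A = (\<Sum>b\<in>h ` A. card {a \<in> A. h a = b})"
  unfolding card_eq_sum by (rule sum.image_gen)

lemma card_fiber_ge_2:
  assumes "\<forall>a\<in>A. s a \<in> A \<and> s a \<noteq> a \<and> h (s a) = h a" "finite A" "b \<in> h ` A"
  shows "2 \<le> card {a \<in> A. h a = b}"
proof -
  obtain a where a: "a \<in> A" "h a = b" using assms(3) by blast
  then have "{a, s a} \<subseteq> {a \<in> A. h a = b}" "s a \<noteq> a" using assms(1) by auto
  then show ?thesis
    using assms(2) card_mono[of "{a \<in> A. h a = b}" "{a, s a}"] by simp
qed

lemma double_card_image_le: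
  assumes "\<forall>a\<in>A. s a \<in> A \<and> s a \<noteq> a \<and> h (s a) = h a" "finite A"
  shows "2 * card (h ` A) \<le> card A"
proof -
  have "2 * card (h ` A) = (\<Sum>b\<in>h ` A. 2)" by simp
  also have "\<dots> \<le> (\<Sum>b\<in>h ` A. card {a \<in> A. h a = b})"
    by (rule sum_mono) (rule card_fiber_ge_2[OF assms])
  also have "\<dots> = card A"
    by (rule card_eq_sum_card_fibers[OF assms(2), symmetric])
  finally show ?thesis .
qed

lemma double_card_image_less:
  assumes "\<forall>a\<in>A. s a \<in> A \<and> s a \<noteq> a \<and> h (s a) = h a" "finite A"
    and "{a0, a1, a2} \<subseteq> A" "card {a0, a1, a2} = 3" "h a1 = h a0" "h a2 = h a0"
  shows "2 * card (h ` A) < card A"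
proof -
  let ?b = "h a0"
  have b: "?b \<in> h ` A" using assms(3) by blast
  have "3 \<le> card {a \<in> A. h a = ?b}"
    using assms(2-6) card_mono[of "{a \<in> A. h a = ?b}" "{a0, a1, a2}"] by simp
  moreover have "(\<Sum>b\<in>h ` A - {?b}. 2) \<le> (\<Sum>b\<in>h ` A - {?b}. card {a \<in> A. h a = b})"
    by (rule sum_mono) (simp add: card_fiber_ge_2[OF assms(1,2)])
  moreover have "card A = card {a \<in> A. h a = ?b} + (\<Sum>b\<in>h ` A - {?b}. card {a \<in> A. h a = b})"
    unfolding card_eq_sum_card_fibers[OF assms(2), of h] using assms(2) b by (simp add: sum.remove)
  moreover have "card (h ` A) = Suc (card (h ` A - {?b}))"
    using assms(2) b by (intro card_Suc_Diff1 [symmetric]) auto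
  ultimately show ?thesis by simp
qed

section \<open>Paths, cycles and girth\<close>

lemma rtrancl_path_nth:
  "rtrancl_path r x xs y \<Longrightarrow> Suc i < length (x # xs) \<Longrightarrow> r ((x # xs) ! i) ((x # xs) ! Suc i)"
  by (induction arbitrary: i rule: rtrancl_path.induct) (auto simp: nth_Cons split: nat.split)

lemma rtrancl_path_last: "rtrancl_path r x xs y \<Longrightarrow> last (x # xs) = y"
  by (induction rule: rtrancl_path.induct) auto

lemma rtranclp_imp_distinct_path:
  assumes "r\<^sup>*\<^sup>* x y"
  obtains ps where "ps \<noteq> []" "hd ps = x" "last ps = y" "distinct ps"
    "\<And>i. Suc i < length ps \<Longrightarrow> r (ps ! i) (ps ! Suc i)"
proof -
  obtain xs where "rtrancl_path r x xs y"
    using assms by (auto simp: rtranclp_eq_rtrancl_path)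
  then obtain xs' where path: "rtrancl_path r x xs' y" and "distinct (x # xs')"
    by (rule rtrancl_path_distinct)
  then show thesis
    using that[OF _ _ rtrancl_path_last[OF path] _ rtrancl_path_nth[OF path]] by simp
qed

lemma simple_graph_edge_neq: "simple_graph V E \<Longrightarrow> {u, v} \<in> E \<Longrightarrow> u \<noteq> v"
  unfolding simple_graph_def by (auto simp: doubleton_eq_iff)

lemma cycle_closing_path:
  assumes G: "simple_graph V E" and uv: "{u, v} \<in> E" and H: "H \<subseteq> E - {{u, v}}"
    and path: "(\<lambda>a b. {a, b} \<in> H)\<^sup>*\<^sup>* u v"
  shows "\<exists>vs. is_cycle V E vs \<and> set vs \<subseteq> \<Union>H"
proof -
  obtain ps where ps: "ps \<noteq> []" "hd ps = u" "last ps = v" "distinct ps"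
    and step: "\<And>i. Suc i < length ps \<Longrightarrow> {ps ! i, ps ! Suc i} \<in> H"
    using rtranclp_imp_distinct_path[OF path] by blast
  have first: "ps ! 0 = u" and final: "ps ! (length ps - 1) = v"
    using ps by (auto simp: hd_conv_nth last_conv_nth)
  have "length ps \<noteq> 1"
    using first final simple_graph_edge_neq[OF G uv] by auto
  moreover have "length ps \<noteq> 2"
    using step[of 0] first final H by auto
  moreover have "length ps \<noteq> 0"
    using ps(1) by simp
  ultimately have len: "length ps \<ge> 3"
    by linarith
  have set: "set ps \<subseteq> \<Union>H"
  proof
    fix w assume "w \<in> set ps"
    then obtain i where i: "i < length ps" "w = ps ! i" by (auto simp: in_set_conv_nth)
    show "w \<in> \<Union>H"
    proof (cases i)
      case 0
      then show ?thesis using step[of 0] i len by auto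
    next
      case (Suc j)
      then show ?thesis using step[of j] i by auto
    qed
  qed
  have "\<Union>H \<subseteq> V"
    using H G unfolding simple_graph_def by fastforce
  moreover have "{ps ! i, ps ! ((i + 1) mod length ps)} \<in> E" if "i < length ps" for i
  proof (cases "Suc i < length ps")
    case True
    then have "(i + 1) mod length ps = Suc i" by simp
    then show ?thesis using step[OF True] H by force
  next
    case False
    then have "Suc i = length ps" using that by simp
    then have "i = length ps - 1" "(i + 1) mod length ps = 0" by auto
    then show ?thesis using first final uv by (simp add: insert_commute)
  qed
  ultimately have "is_cycle V E ps"
    unfolding is_cycle_def using len ps(4) set by auto
  then show ?thesis using set by blast
qed

lemma girth_cycle:
  assumes "has_cycle V E"
  obtains vs where "is_cycle V E vs" "length vs = girth V E"
proof -
  obtain vs where "is_cycle V E vs" using assms unfolding has_cycle_def by blast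
  have "\<exists>vs'. is_cycle V E vs' \<and> length vs' = girth V E"
    unfolding girth_def by (rule LeastI [of _ "length vs"]) (use \<open>is_cycle V E vs\<close> in blast)
  then show thesis using that by blast
qed

lemma girth_le_length: "is_cycle V E vs \<Longrightarrow> girth V E \<le> length vs"
  unfolding girth_def by (rule Least_le) blast

lemma girth_ge_3: "has_cycle V E \<Longrightarrow> 3 \<le> girth V E"
  by (rule girth_cycle) (auto simp: is_cycle_def)

lemma orb2_self: "x \<in> orb2 s t x"
  unfolding orb2_def by simp

lemma orb2_closed:
  assumes "a \<in> orb2 s t x"
  shows "s a \<in> orb2 s t x" "t a \<in> orb2 s t x"
  using assms unfolding orb2_def by (simp_all add: rtranclp.rtrancl_into_rtrancl)

lemma orb2_subset:
  assumes "fpf_involution F s" "fpf_involution F t" "x \<in> F"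
  shows "orb2 s t x \<subseteq> F"
proof
  fix y assume "y \<in> orb2 s t x"
  then have "(\<lambda>a b. b = s a \<or> b = t a)\<^sup>*\<^sup>* x y" unfolding orb2_def by simp
  then show "y \<in> F"
    by induction (use assms in \<open>auto simp: fpf_involution_def\<close>)
qed

lemma orb2_sym:
  assumes "fpf_involution F s" "fpf_involution F t" "x \<in> F" "y \<in> orb2 s t x"
  shows "x \<in> orb2 s t y"
proof -
  let ?R = "\<lambda>a b. b = s a \<or> b = t a"
  have "?R\<^sup>*\<^sup>* x y" using assms(4) unfolding orb2_def by simp
  then have "?R\<^sup>*\<^sup>* y x"
  proof induction
    case (step y z)
    have "y \<in> F"
      using step.hyps(1) orb2_subset[OF assms(1-3)] unfolding orb2_def by blast
    then have "?R z y"
      using step.hyps(2) assms(1,2) unfolding fpf_involution_def by auto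
    then show ?case using step.IH by (rule converse_rtranclp_into_rtranclp)
  qed simp
  then show ?thesis unfolding orb2_def by simp
qed

lemma orb2_eq:
  assumes "fpf_involution F s" "fpf_involution F t" "x \<in> F" "y \<in> orb2 s t x"
  shows "orb2 s t y = orb2 s t x"
proof -
  have "x \<in> orb2 s t y" using orb2_sym[OF assms] .
  then show ?thesis
    using assms(4) unfolding orb2_def by (auto intro: rtranclp_trans)
qed

section \<open>Cellular embeddings\<close>

locale cellular_embedding =
  fixes V :: "'a set" and E :: "'a set set" and M :: "('f, 'a) gmap"
  assumes embedding: "is_embedding V E M"
begin

lemma finite_flags: "finite (flags M)"
  and fpf_involution_t0: "fpf_involution (flags M) (t0 M)"
  and fpf_involution_t1: "fpf_involution (flags M) (t1 M)"
  and fpf_involution_t2: "fpf_involution (flags M) (t2 M)"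
  using embedding by (simp_all add: is_embedding_def)

lemma t_in_flags [simp]:
  assumes "x \<in> flags M"
  shows "t0 M x \<in> flags M" "t1 M x \<in> flags M" "t2 M x \<in> flags M"
  using assms fpf_involution_t0 fpf_involution_t1 fpf_involution_t2
  unfolding fpf_involution_def by blast+

lemma t_involutive [simp]:
  assumes "x \<in> flags M"
  shows "t0 M (t0 M x) = x" "t1 M (t1 M x) = x" "t2 M (t2 M x) = x"
  using assms fpf_involution_t0 fpf_involution_t1 fpf_involution_t2
  unfolding fpf_involution_def by blast+

lemma t_fixpoint_free [simp]:
  assumes "x \<in> flags M"
  shows "t0 M x \<noteq> x" "t1 M x \<noteq> x" "t2 M x \<noteq> x"
  using assms fpf_involution_t0 fpf_involution_t1 fpf_involution_t2
  unfolding fpf_involution_def by blast+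

lemma t0_t2_commute: "x \<in> flags M \<Longrightarrow> t0 M (t2 M x) = t2 M (t0 M x)"
  using embedding by (simp add: is_embedding_def)

lemma vtx_in_V: "x \<in> flags M \<Longrightarrow> vtx M x \<in> V"
  and vtx_t1 [simp]: "x \<in> flags M \<Longrightarrow> vtx M (t1 M x) = vtx M x"
  and vtx_t2 [simp]: "x \<in> flags M \<Longrightarrow> vtx M (t2 M x) = vtx M x"
  and medge_in_E: "x \<in> flags M \<Longrightarrow> medge M x \<in> E"
  using embedding by (simp_all add: is_embedding_def)

lemma V_eq_vtx_image: "V = vtx M ` flags M"
proof -
  have "\<forall>v\<in>V. \<exists>x\<in>flags M. vtx M x = v"
    using embedding unfolding is_embedding_def by (elim conjE) assumption
  then show ?thesis using vtx_in_V by auto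
qed

lemma E_eq_medge_image: "E = medge M ` flags M"
proof -
  have "\<forall>e\<in>E. \<exists>x\<in>flags M. medge M x = e"
    using embedding unfolding is_embedding_def by (elim conjE) assumption
  then show ?thesis using medge_in_E by auto
qed

lemma medge_eq_imp:
  assumes "x \<in> flags M" "y \<in> flags M" "medge M x = medge M y"
  shows "y \<in> {x, t0 M x, t2 M x, t0 M (t2 M x)}"
proof -
  have "\<forall>x\<in>flags M. \<forall>y\<in>flags M. medge M x = medge M y \<longrightarrow> y \<in> {x, t0 M x, t2 M x, t0 M (t2 M x)}"
    using embedding unfolding is_embedding_def by (elim conjE) assumption
  then show ?thesis using assms by blast
qed

lemma medge_t2 [simp]: "x \<in> flags M \<Longrightarrow> medge M (t2 M x) = medge M x"
  unfolding medge_def by (simp add: t0_t2_commute)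

lemma flags_subset_if_closed:
  assumes "x \<in> flags M" "x \<in> S" "\<And>a. a \<in> S \<Longrightarrow> t0 M a \<in> S \<and> t1 M a \<in> S \<and> t2 M a \<in> S"
  shows "flags M \<subseteq> S"
proof
  fix y assume "y \<in> flags M"
  moreover have "\<forall>x\<in>flags M. \<forall>y\<in>flags M. (\<lambda>a b. b = t0 M a \<or> b = t1 M a \<or> b = t2 M a)\<^sup>*\<^sup>* x y"
    using embedding unfolding is_embedding_def by (elim conjE) assumption
  ultimately have "(\<lambda>a b. b = t0 M a \<or> b = t1 M a \<or> b = t2 M a)\<^sup>*\<^sup>* x y"
    using assms(1) by blast
  then show "y \<in> S"
    by induction (use assms(2,3) in auto)
qed

lemma card_flags_le: "card (flags M) \<le> 4 * card E"
proof -
  have "card (flags M) = (\<Sum>e\<in>E. card {x \<in> flags M. medge M x = e})"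
    unfolding E_eq_medge_image by (rule card_eq_sum_card_fibers[OF finite_flags])
  also have "\<dots> \<le> (\<Sum>e\<in>E. 4)"
  proof (rule sum_mono)
    fix e assume "e \<in> E"
    then obtain x where x: "x \<in> flags M" "medge M x = e"
      unfolding E_eq_medge_image by blast
    then have "{y \<in> flags M. medge M y = e} \<subseteq> set [x, t0 M x, t2 M x, t0 M (t2 M x)]"
      using medge_eq_imp by auto
    then have "card {y \<in> flags M. medge M y = e} \<le> card (set [x, t0 M x, t2 M x, t0 M (t2 M x)])"
      by (rule card_mono[rotated]) simp
    also have "\<dots> \<le> 4"
      using card_length[of "[x, t0 M x, t2 M x, t0 M (t2 M x)]"] by simp
    finally show "card {y \<in> flags M. medge M y = e} \<le> 4" .
  qed
  finally show ?thesis by simp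
qed

lemma facesE:
  assumes "f \<in> faces M"
  obtains x where "x \<in> flags M" "f = orb2 (t0 M) (t1 M) x"
  using assms unfolding faces_def by blast

lemma face_subset_flags: "f \<in> faces M \<Longrightarrow> f \<subseteq> flags M"
  by (erule facesE) (simp add: orb2_subset fpf_involution_t0 fpf_involution_t1)

lemma finite_face: "f \<in> faces M \<Longrightarrow> finite f"
  using face_subset_flags finite_flags by (rule finite_subset)

lemma face_t0_closed: "f \<in> faces M \<Longrightarrow> a \<in> f \<Longrightarrow> t0 M a \<in> f"
  and face_t1_closed: "f \<in> faces M \<Longrightarrow> a \<in> f \<Longrightarrow> t1 M a \<in> f"
  by (erule facesE, simp add: orb2_closed)+

lemma face_eq_orb2:
  assumes "f \<in> faces M" "y \<in> f"
  shows "f = orb2 (t0 M) (t1 M) y"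
proof -
  obtain x where "x \<in> flags M" "f = orb2 (t0 M) (t1 M) x"
    using assms(1) by (rule facesE)
  then show ?thesis
    using assms(2) orb2_eq[OF fpf_involution_t0 fpf_involution_t1] by simp
qed

lemma face_flag_in_flags: "f \<in> faces M \<Longrightarrow> a \<in> f \<Longrightarrow> a \<in> flags M"
  using face_subset_flags by blast

lemma faces_disjoint: "f1 \<in> faces M \<Longrightarrow> f2 \<in> faces M \<Longrightarrow> f1 \<noteq> f2 \<Longrightarrow> f1 \<inter> f2 = {}"
  using face_eq_orb2 by blast

lemma finite_faces: "finite (faces M)"
  unfolding faces_def using finite_flags by simp

lemma even_card_face: "f \<in> faces M \<Longrightarrow> even (card f)"
  by (rule even_card_fpf_involution[of _ "t0 M"])
    (auto simp: finite_face fpf_involution_def face_t0_closed dest: face_flag_in_flags)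

lemma double_card_face_vertices_le:
  "f \<in> faces M \<Longrightarrow> 2 * card (face_vertices M f) \<le> card f"
  unfolding face_vertices_def
  by (rule double_card_image_le[of _ "t1 M"])
    (auto simp: finite_face face_t1_closed dest: face_flag_in_flags)

lemma card_Union_faces:
  assumes "S \<subseteq> faces M"
  shows "card (\<Union>S) = (\<Sum>f\<in>S. card f)"
proof -
  have "pairwise disjnt S"
    using assms faces_disjoint unfolding pairwise_def disjnt_def by blast
  then show ?thesis
    using assms finite_subset[OF assms finite_faces]
    by (intro card_Union_disjoint) (auto simp: finite_face)
qed

lemma Union_faces_subset_flags: "S \<subseteq> faces M \<Longrightarrow> \<Union>S \<subseteq> flags M"
  using face_subset_flags by blast

lemma sum_card_faces_le:
  assumes "S \<subseteq> faces M"
  shows "(\<Sum>f\<in>S. card f) \<le> card (flags M)"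
  unfolding card_Union_faces[OF assms, symmetric]
  using Union_faces_subset_flags[OF assms] by (intro card_mono finite_flags)

text \<open>The relation walks around the face of x without traversing the edge-side {x, t0 x}.\<close>

lemma face_walk_returns:
  assumes x: "x \<in> flags M"
  shows "(\<lambda>a b. b = t1 M a \<or> (b = t0 M a \<and> a \<noteq> x \<and> a \<noteq> t0 M x))\<^sup>*\<^sup>* x (t0 M x)"
    (is "?step\<^sup>*\<^sup>* x (t0 M x)")
proof (rule ccontr)
  assume not_back: "\<not> ?step\<^sup>*\<^sup>* x (t0 M x)"
  define R where "R = {b. ?step\<^sup>*\<^sup>* x b}"
  have "(\<lambda>a b. b = t0 M a \<or> b = t1 M a)\<^sup>*\<^sup>* x b" if "?step\<^sup>*\<^sup>* x b" for b
    using that by induction (auto intro: rtranclp.rtrancl_into_rtrancl)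
  then have "R \<subseteq> orb2 (t0 M) (t1 M) x"
    unfolding R_def orb2_def by blast
  then have R_flags: "R \<subseteq> flags M"
    using orb2_subset[OF fpf_involution_t0 fpf_involution_t1 x] by blast
  have step_R: "b \<in> R" if "a \<in> R" "?step a b" for a b
    using that unfolding R_def by (simp add: rtranclp.rtrancl_into_rtrancl)
  have fpf1: "fpf_involution R (t1 M)"
    unfolding fpf_involution_def using R_flags step_R[of _ "t1 M _"] by auto
  have fpf0: "fpf_involution (R - {x}) (t0 M)"
  proof -
    have "t0 M a \<in> R - {x}" if "a \<in> R - {x}" for a
    proof -
      have a: "a \<in> R" "a \<noteq> x" "a \<in> flags M"
        using that R_flags by auto
      have "a \<noteq> t0 M x" using a(1) not_back unfolding R_def by auto
      then have "t0 M a \<in> R"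
        using step_R[OF a(1), of "t0 M a"] a(2) by simp
      moreover have "t0 M a \<noteq> x"
        using \<open>a \<noteq> t0 M x\<close> a(3) by auto
      ultimately show ?thesis by simp
    qed
    then show ?thesis
      unfolding fpf_involution_def using R_flags by auto
  qed
  have "x \<in> R"
    unfolding R_def by simp
  moreover have "finite R"
    using R_flags finite_flags by (rule finite_subset)
  ultimately show False
    using not_fpf_involution_Diff_singleton[OF _ _ fpf1] fpf0 by simp
qed

lemma face_boundary_avoids_edge:
  assumes x: "x \<in> flags M" and t2x: "t2 M x \<notin> orb2 (t0 M) (t1 M) x"
  shows "(\<lambda>u w. {u, w} \<in> medge M ` orb2 (t0 M) (t1 M) x - {medge M x})\<^sup>*\<^sup>* (vtx M x) (vtx M (t0 M x))"
    (is "?walk\<^sup>*\<^sup>* _ _")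
proof -
  let ?f = "orb2 (t0 M) (t1 M) x"
  let ?step = "\<lambda>a b. b = t1 M a \<or> (b = t0 M a \<and> a \<noteq> x \<and> a \<noteq> t0 M x)"
  have f_flags: "?f \<subseteq> flags M"
    by (rule orb2_subset[OF fpf_involution_t0 fpf_involution_t1 x])
  have t0_t2x: "t0 M (t2 M x) \<notin> ?f"
    using t2x orb2_closed(1)[of "t0 M (t2 M x)" "t0 M" "t1 M" x] x by auto
  have "b \<in> ?f \<and> ?walk\<^sup>*\<^sup>* (vtx M x) (vtx M b)" if "?step\<^sup>*\<^sup>* x b" for b
    using that
  proof induction
    case base
    show ?case by (simp add: orb2_self)
  next
    case (step a b)
    then have a: "a \<in> ?f" "a \<in> flags M" and walk: "?walk\<^sup>*\<^sup>* (vtx M x) (vtx M a)"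
      using f_flags by auto
    show ?case
    proof (cases "b = t1 M a")
      case True
      then show ?thesis using a walk by (simp add: orb2_closed)
    next
      case False
      then have b: "b = t0 M a" "a \<noteq> x" "a \<noteq> t0 M x"
        using step.hyps(2) by auto
      \<comment> \<open>Only x, t0 x, t2 x and t0 (t2 x) carry the edge of x, and the last two are not in the face.\<close>
      have "a \<noteq> t2 M x" "a \<noteq> t0 M (t2 M x)"
        using a(1) t2x t0_t2x by auto
      then have "medge M a \<noteq> medge M x"
        using medge_eq_imp[OF x a(2)] b by auto
      then have "?walk (vtx M a) (vtx M b)"
        using a(1) b(1) unfolding medge_def by auto
      then show ?thesis
        using walk a(1) b(1) by (simp add: orb2_closed rtranclp.rtrancl_into_rtrancl)
    qed
  qed
  then show ?thesis
    using face_walk_returns[OF x] by blast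
qed

lemma double_card_face_vertices_less:
  assumes f: "f \<in> faces M" and x: "x \<in> f" "t2 M x \<in> f" "t1 M x \<noteq> t2 M x"
  shows "2 * card (face_vertices M f) < card f"
proof -
  have x_flag: "x \<in> flags M" using face_flag_in_flags[OF f x(1)] .
  have pairing: "\<forall>a\<in>f. t1 M a \<in> f \<and> t1 M a \<noteq> a \<and> vtx M (t1 M a) = vtx M a"
    using face_t1_closed[OF f] face_flag_in_flags[OF f] by simp
  have "x \<noteq> t1 M x" "x \<noteq> t2 M x"
    using t_fixpoint_free[OF x_flag] by metis+
  then have "card {x, t1 M x, t2 M x} = 3"
    using x(3) by simp
  moreover have "{x, t1 M x, t2 M x} \<subseteq> f"
    using x face_t1_closed[OF f] by blast
  moreover have "vtx M (t1 M x) = vtx M x" "vtx M (t2 M x) = vtx M x"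
    using x_flag by simp_all
  ultimately show ?thesis
    unfolding face_vertices_def using double_card_image_less[OF pairing finite_face[OF f]] by blast
qed

lemma flags_subset_if_t1_eq_t2:
  assumes x: "x \<in> flags M" and t1x: "t1 M x = t2 M x" and t1y: "t1 M (t0 M x) = t2 M (t0 M x)"
  shows "flags M \<subseteq> {x, t0 M x, t2 M x, t0 M (t2 M x)}"
proof (rule flags_subset_if_closed[OF x])
  define y z w where "y = t0 M x" and "z = t2 M x" and "w = t0 M (t2 M x)"
  have flags: "y \<in> flags M" "z \<in> flags M"
    using x unfolding y_def z_def by simp_all
  have "t0 M x = y" "t0 M y = x" "t0 M z = w" "t0 M w = z"
    "t1 M x = z" "t1 M z = x" "t1 M y = w" "t1 M w = y"
    "t2 M x = z" "t2 M z = x" "t2 M y = w" "t2 M w = y"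
    using x t1x t1y t_involutive(2)[OF x, unfolded t1x] t_involutive(2)[OF flags(1)[unfolded y_def], unfolded t1y]
    unfolding y_def z_def w_def by (simp_all add: t0_t2_commute)
  then show "t0 M a \<in> {x, y, z, w} \<and> t1 M a \<in> {x, y, z, w} \<and> t2 M a \<in> {x, y, z, w}"
    if "a \<in> {x, y, z, w}" for a
    using that by auto
qed simp

end

section \<open>Faces of an embedded graph with a cycle\<close>

locale cyclic_cellular_embedding = cellular_embedding +
  assumes simple: "simple_graph V E" and cyclic: "has_cycle V E"
begin

lemma face_contains_cycle:
  assumes f: "f \<in> faces M"
  obtains vs where "is_cycle V E vs" "set vs \<subseteq> face_vertices M f"
proof (cases "\<exists>y\<in>f. t2 M y \<notin> f")
  case True
  then obtain y where y: "y \<in> f" "t2 M y \<notin> f" by blast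
  have y_flag: "y \<in> flags M" and f_eq: "f = orb2 (t0 M) (t1 M) y"
    using face_flag_in_flags[OF f y(1)] face_eq_orb2[OF f y(1)] by auto
  let ?H = "medge M ` f - {medge M y}"
  have uv: "{vtx M y, vtx M (t0 M y)} \<in> E"
    using medge_in_E[OF y_flag] unfolding medge_def .
  have H: "?H \<subseteq> E - {{vtx M y, vtx M (t0 M y)}}"
    using face_flag_in_flags[OF f] medge_in_E unfolding medge_def by blast
  have walk: "(\<lambda>u w. {u, w} \<in> ?H)\<^sup>*\<^sup>* (vtx M y) (vtx M (t0 M y))"
    using face_boundary_avoids_edge[OF y_flag] y(2) f_eq by simp
  obtain vs where vs: "is_cycle V E vs" "set vs \<subseteq> \<Union>?H"
    using cycle_closing_path[OF simple uv H walk] by blast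
  have "\<Union>?H \<subseteq> face_vertices M f"
    unfolding face_vertices_def medge_def using face_t0_closed[OF f] by blast
  then show thesis
    using that[OF vs(1)] vs(2) by (meson order_trans)
next
  case False
  obtain x where x: "x \<in> flags M" "f = orb2 (t0 M) (t1 M) x"
    using f by (rule facesE)
  have "flags M \<subseteq> f"
    using x False face_t0_closed[OF f] face_t1_closed[OF f]
    by (intro flags_subset_if_closed[OF x(1)]) (auto simp: orb2_self)
  then have "V \<subseteq> face_vertices M f"
    unfolding V_eq_vtx_image face_vertices_def by blast
  moreover obtain vs where "is_cycle V E vs"
    using cyclic unfolding has_cycle_def by blast
  ultimately show thesis
    using that[of vs] unfolding is_cycle_def by auto
qed

lemma girth_le_card_face_vertices:
  assumes f: "f \<in> faces M"
  shows "girth V E \<le> card (face_vertices M f)"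
proof -
  obtain vs where vs: "is_cycle V E vs" "set vs \<subseteq> face_vertices M f"
    using f by (rule face_contains_cycle)
  have "girth V E \<le> card (set vs)"
    using girth_le_length[OF vs(1)] vs(1) unfolding is_cycle_def by (simp add: distinct_card)
  also have "\<dots> \<le> card (face_vertices M f)"
    using vs(2) finite_face[OF f] unfolding face_vertices_def by (intro card_mono) auto
  finally show ?thesis .
qed

lemma girth_le_face_deg: "f \<in> faces M \<Longrightarrow> girth V E \<le> face_deg f"
  using girth_le_card_face_vertices double_card_face_vertices_le
  unfolding face_deg_def by fastforce

text \<open>
  A g-face has 2g flags and at least g vertices, each carried by two of its flags related by
  t1. Containing both x and t2 x would give some vertex a third flag, unless t1 agrees with
  t2 at x and t0 x, in which case the whole map has at most four flags.
\<close>

lemma t2_notin_girth_face: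
  assumes f: "f \<in> faces M" and deg: "face_deg f = girth V E" and x: "x \<in> f"
  shows "t2 M x \<notin> f"
proof
  assume t2x: "t2 M x \<in> f"
  have x_flag: "x \<in> flags M" using face_flag_in_flags[OF f x] .
  have card_f: "card f = 2 * girth V E"
    using even_card_face[OF f] deg unfolding face_deg_def by auto
  then have no_triple: "\<not> 2 * card (face_vertices M f) < card f"
    using girth_le_card_face_vertices[OF f] by linarith
  show False
  proof (cases "t1 M x = t2 M x")
    case False
    then show False using double_card_face_vertices_less[OF f x t2x] no_triple by blast
  next
    case True
    have t2_t0x: "t2 M (t0 M x) \<in> f"
      using face_t0_closed[OF f t2x] x_flag by (simp add: t0_t2_commute)
    show False
    proof (cases "t1 M (t0 M x) = t2 M (t0 M x)")
      case False
      then show False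
        using double_card_face_vertices_less[OF f face_t0_closed[OF f x] t2_t0x] no_triple by blast
    next
      case True
      have "card f \<le> card {x, t0 M x, t2 M x, t0 M (t2 M x)}"
        using face_subset_flags[OF f] flags_subset_if_t1_eq_t2[OF x_flag \<open>t1 M x = t2 M x\<close> True]
        by (intro card_mono) auto
      also have "\<dots> \<le> 4"
        by (rule card_insert_le_m1, simp)+ simp
      finally show False
        using card_f girth_ge_3[OF cyclic] by linarith
    qed
  qed
qed

definition girth_faces where
  "girth_faces = {f \<in> faces M. face_deg f = girth V E}"

lemma girth_faces_subset: "girth_faces \<subseteq> faces M"
  unfolding girth_faces_def by blast

lemma card_girth_face: "f \<in> girth_faces \<Longrightarrow> card f = 2 * girth V E"
  using even_two_times_div_two[OF even_card_face, of f] unfolding girth_faces_def face_deg_def by auto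

lemma weighted_face_count_le:
  "girth V E * card girth_faces + (girth V E + 1) * card (faces M - girth_faces) \<le> 2 * card E"
proof -
  let ?g = "girth V E" and ?O = "faces M - girth_faces"
  have "(\<Sum>f\<in>?O. 2 * (?g + 1)) \<le> (\<Sum>f\<in>?O. card f)"
  proof (rule sum_mono)
    fix f assume "f \<in> ?O"
    then have "?g < face_deg f"
      using girth_le_face_deg[of f] unfolding girth_faces_def by fastforce
    then show "2 * (?g + 1) \<le> card f"
      unfolding face_deg_def by presburger
  qed
  moreover have "(\<Sum>f\<in>girth_faces. card f) = (\<Sum>f\<in>girth_faces. 2 * ?g)"
    by (rule sum.cong) (simp_all add: card_girth_face)
  moreover have "(\<Sum>f\<in>faces M. card f) = (\<Sum>f\<in>?O. card f) + (\<Sum>f\<in>girth_faces. card f)"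
    using sum.subset_diff[OF girth_faces_subset finite_faces] .
  moreover have "(\<Sum>f\<in>faces M. card f) \<le> 4 * card E"
    using sum_card_faces_le[of "faces M"] card_flags_le by simp
  ultimately show ?thesis
    by (simp add: algebra_simps)
qed

lemma girth_faces_count_le_vertices:
  assumes "no_two_intersecting_faces_of_deg M (girth V E)"
  shows "girth V E * card girth_faces \<le> card V"
proof -
  have "girth V E * card girth_faces = (\<Sum>f\<in>girth_faces. girth V E)"
    by simp
  also have "\<dots> \<le> (\<Sum>f\<in>girth_faces. card (face_vertices M f))"
    using girth_faces_subset by (intro sum_mono girth_le_card_face_vertices) blast
  also have "\<dots> = card (\<Union>f\<in>girth_faces. face_vertices M f)"
    using assms finite_subset[OF girth_faces_subset finite_faces] finite_face girth_faces_subset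
    unfolding no_two_intersecting_faces_of_deg_def girth_faces_def face_vertices_def
    by (intro card_UN_disjoint[symmetric]) auto
  also have "\<dots> \<le> card V"
    using simple girth_faces_subset face_subset_flags unfolding simple_graph_def face_vertices_def
    by (intro card_mono) (auto simp: V_eq_vtx_image)
  finally show ?thesis .
qed

lemma t2_notin_girth_faces:
  assumes "no_two_adjacent_faces_of_deg M (girth V E)"
    and f1: "f1 \<in> girth_faces" and f2: "f2 \<in> girth_faces" and x: "x \<in> f1"
  shows "t2 M x \<notin> f2"
proof
  assume t2x: "t2 M x \<in> f2"
  have f1_face: "f1 \<in> faces M" "face_deg f1 = girth V E"
    using f1 unfolding girth_faces_def by auto
  have "f1 \<noteq> f2"
    using t2_notin_girth_face[OF f1_face x] t2x by blast
  moreover have "medge M x \<in> face_edges M f1 \<inter> face_edges M f2"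
    using x t2x medge_t2[OF face_flag_in_flags[OF f1_face(1) x]]
    unfolding face_edges_def by (metis IntI image_eqI)
  ultimately show False
    using assms(1) f1 f2 unfolding no_two_adjacent_faces_of_deg_def girth_faces_def by blast
qed

lemma girth_faces_count_le_edges:
  assumes "no_two_adjacent_faces_of_deg M (girth V E)"
  shows "girth V E * card girth_faces \<le> card E"
proof -
  let ?U = "\<Union>girth_faces"
  have U: "?U \<subseteq> flags M"
    by (rule Union_faces_subset_flags[OF girth_faces_subset])
  then have "finite ?U"
    using finite_flags by (rule finite_subset)
  have "card ?U = (\<Sum>f\<in>girth_faces. card f)"
    by (rule card_Union_faces[OF girth_faces_subset])
  also have "\<dots> = (\<Sum>f\<in>girth_faces. 2 * girth V E)"
    by (rule sum.cong) (simp_all add: card_girth_face)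
  finally have "card ?U = 2 * (girth V E * card girth_faces)"
    by simp
  moreover have "card (?U \<union> t2 M ` ?U) = 2 * card ?U"
  proof -
    have "?U \<inter> t2 M ` ?U = {}"
      using t2_notin_girth_faces[OF assms] by blast
    moreover have "inj_on (t2 M) ?U"
      using U by (metis inj_onI subsetD t_involutive(3))
    ultimately show ?thesis
      using \<open>finite ?U\<close> by (simp add: card_Un_disjoint card_image)
  qed
  moreover have "card (?U \<union> t2 M ` ?U) \<le> card (flags M)"
    using U by (intro card_mono finite_flags) auto
  ultimately show ?thesis
    using card_flags_le by simp
qed

end

section \<open>Average degree bounds\<close>

lemma average_degree_bound_girth:
  fixes n e f g :: real
  assumes "n > 0" "g \<ge> 3" "g * f \<le> 2 * e"
  shows "2 * e / n \<le> 2 * g / (g - 2) * (1 - (n - e + f) / n)"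
proof -
  have "2 * e * (g - 2) \<le> 2 * g * (e - f)"
    using assms(3) by (simp add: algebra_simps)
  then show ?thesis
    using assms(1,2) by (simp add: field_simps)
qed

lemma average_degree_bound_no_intersecting:
  fixes n e f\<^sub>g f\<^sub>o g :: real
  assumes "n > 0" "g \<ge> 3" "g * f\<^sub>g + (g + 1) * f\<^sub>o \<le> 2 * e" "g * f\<^sub>g \<le> n"
  shows "2 * e / n \<le> 2 + (4 * g + 2) / (g ^ 2 - g)
           - 2 * (1 + 2 / (g - 1)) * ((n - e + (f\<^sub>g + f\<^sub>o)) / n)"
proof -
  define D where "D = g * (g - 1)"
  have D: "D > 0" "g ^ 2 - g = D" "2 * (1 + 2 / (g - 1)) = 2 * g * (g + 1) / D"
    using assms(2) by (auto simp: D_def field_simps power2_eq_square)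
  have "g * (g * f\<^sub>g + (g + 1) * f\<^sub>o) \<le> g * (2 * e)"
    using assms(2,3) by (intro mult_left_mono) auto
  then have "0 \<le> 2 * (n + 2 * g * e - g * (g + 1) * (f\<^sub>g + f\<^sub>o)) / (D * n)"
    using assms(1,4) D(1) by (simp add: algebra_simps)
  also have "\<dots> = 2 + (4 * g + 2) / D - 2 * g * (g + 1) / D * ((n - e + (f\<^sub>g + f\<^sub>o)) / n) - 2 * e / n"
    using assms(1) D(1) by (simp add: field_simps) (simp add: D_def algebra_simps)
  finally show ?thesis
    unfolding D(2,3) by simp
qed

lemma average_degree_bound_no_adjacent:
  fixes n e f\<^sub>g f\<^sub>o g :: real
  assumes "n > 0" "g \<ge> 3" "g * f\<^sub>g + (g + 1) * f\<^sub>o \<le> 2 * e" "g * f\<^sub>g \<le> e"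
  shows "2 * e / n \<le> 2 * g * (g + 1) / (g ^ 2 - g - 1) * (1 - (n - e + (f\<^sub>g + f\<^sub>o)) / n)"
proof -
  define D where "D = g ^ 2 - g - 1"
  have "3 * g \<le> g * g"
    using assms(2) by (intro mult_right_mono) auto
  then have "D > 0"
    using assms(2) unfolding D_def power2_eq_square by linarith
  have "g * (g * f\<^sub>g + (g + 1) * f\<^sub>o) \<le> g * (2 * e)"
    using assms(2,3) by (intro mult_left_mono) auto
  then have "0 \<le> 2 * ((2 * g + 1) * e - g * (g + 1) * (f\<^sub>g + f\<^sub>o)) / (D * n)"
    using assms(1,4) \<open>D > 0\<close> by (simp add: algebra_simps)
  also have "\<dots> = 2 * g * (g + 1) / D * (1 - (n - e + (f\<^sub>g + f\<^sub>o)) / n) - 2 * e / n"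
    using assms(1) \<open>D > 0\<close> by (simp add: field_simps) (simp add: D_def power2_eq_square algebra_simps)
  finally show ?thesis
    unfolding D_def by simp
qed

theorem lemma2p2:
  fixes V :: "'a set" and E :: "'a set set" and M :: "('f, 'a) gmap"
  assumes "simple_graph V E" and "connected_graph V E" and "has_cycle V E"
    and "is_embedding V E M"
    and "\<forall>M' :: ('f, 'a) gmap. is_embedding V E M' \<longrightarrow> euler_char V E M' \<le> euler_char V E M"
  shows "2 * real (card E) / real (card V)
           \<le> 2 * real (girth V E) / (real (girth V E) - 2)
               * (1 - real_of_int (euler_char V E M) / real (card V))
    \<and> (no_two_intersecting_faces_of_deg M (girth V E) \<longrightarrow>
         2 * real (card E) / real (card V)
           \<le> 2 + (4 * real (girth V E) + 2) / (real (girth V E) ^ 2 - real (girth V E))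
               - 2 * (1 + 2 / (real (girth V E) - 1))
                   * (real_of_int (euler_char V E M) / real (card V)))
    \<and> (no_two_adjacent_faces_of_deg M (girth V E) \<longrightarrow>
         2 * real (card E) / real (card V)
           \<le> 2 * real (girth V E) * (real (girth V E) + 1)
                 / (real (girth V E) ^ 2 - real (girth V E) - 1)
               * (1 - real_of_int (euler_char V E M) / real (card V)))"
proof -
  interpret cyclic_cellular_embedding V E M
    using assms(1,3,4) by unfold_locales
  let ?g = "girth V E" and ?G = "card girth_faces" and ?O = "card (faces M - girth_faces)"
  have n: "real (card V) > 0"
    using assms(1,2) unfolding simple_graph_def connected_graph_def by (simp add: card_gt_0_iff)
  have g: "real ?g \<ge> 3"
    using girth_ge_3[OF assms(3)] by simp
  have "real (?g * ?G + (?g + 1) * ?O) \<le> real (2 * card E)"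
    using weighted_face_count_le by (rule of_nat_mono)
  then have weighted: "real ?g * ?G + (real ?g + 1) * ?O \<le> 2 * real (card E)"
    by (simp add: algebra_simps)
  have "card (faces M) = ?G + ?O"
    using finite_faces girth_faces_subset by (simp add: card_Diff_subset card_mono finite_subset)
  then have \<chi>: "real_of_int (euler_char V E M) = real (card V) - real (card E) + (real ?G + real ?O)"
    unfolding euler_char_def by simp
  have "real ?g * (?G + ?O) \<le> 2 * real (card E)"
    using weighted by (simp add: algebra_simps)
  moreover have "real ?g * ?G \<le> real (card V)" if "no_two_intersecting_faces_of_deg M ?g"
    using of_nat_mono[OF girth_faces_count_le_vertices[OF that]] by simp
  moreover have "real ?g * ?G \<le> real (card E)" if "no_two_adjacent_faces_of_deg M ?g"
    using of_nat_mono[OF girth_faces_count_le_edges[OF that]] by simp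
  ultimately show ?thesis
    unfolding \<chi>
    using average_degree_bound_girth[OF n g] average_degree_bound_no_intersecting[OF n g weighted]
      average_degree_bound_no_adjacent[OF n g weighted]
    by simp
qed

end
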